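(* Consider an $N_r\times N_t$ MIMO setting with constellations $\mathcal{A}_0,\dots,\mathcal{A}_{N_t-1}$ and the associated pseudo-Boolean function $f(z_0,\dots,z_{N-1})=\sum_{S}\bar d_S\prod_{n\in S}z_n$ defined in the context. Let $S\subseteq\{0,\dots,N-1\}$ and suppose there is an antenna index $k$ such that, writing $S_k=S\cap\mathcal{N}_k$, the points $a^{(k)}_{t}\in\mathcal{A}_k$ whose local $N_k$-bit labels $[t]_2$ have bit $0$ at every local position corresponding to $\mathcal{N}_k\setminus S_k$ form a family of rectangles in $\mathbb{C}$ (each with four of these points as vertices, together covering all of them) such that no two rectangles share a vertex, and in each rectangle the local labels of one diagonal pair both contain an odd number of $0$s while those of the other diagonal pair both contain an even number of $0$s. Then $\bar d_S=0$ for all $\mathbf{y}\in\mathbb{C}^{N_r}$ and $\mathbf{H}\in\mathbb{C}^{N_r\times N_t}$.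
   Context: For $k=0,\dots,N_t-1$, $\mathcal{A}_k=\{a^{(k)}_0,\dots,a^{(k)}_{M_k-1}\}\subset\mathbb{C}$ with $M_k=2^{N_k}$; the local label of $a^{(k)}_t$ is the $N_k$-bit binary representation $[t]_2$ (most significant bit first). Let $N=\sum_k N_k$ and $\mathcal{N}_k=\{\sum_{l<k}N_l,\dots,\sum_{l\le k}N_l-1\}$. A joint index $i\in\{0,\dots,2^N-1\}$ corresponds to a tuple $(i_0,\dots,i_{N_t-1})$ via concatenation of binary representations: the $N$-bit representation $b_0(i)\cdots b_{N-1}(i)$ of $i$ equals $[i_0]_2[i_1]_2\cdots[i_{N_t-1}]_2$, so bits at positions $\mathcal{N}_k$ form $[i_k]_2$. Given received vector $\mathbf{y}=(y_0,\dots,y_{N_r-1})$ and channel matrix $\mathbf{H}=(h_{l,k})$, set $d_{l,i}=\big|y_l-\sum_{k}h_{l,k}a^{(k)}_{i_k}\big|^2$ and $f(z_0,\dots,z_{N-1})=\sum_{l=0}^{N_r-1}\sum_{i}d_{l,i}\prod_{n=0}^{N-1}B_{i,n}(z_n)$, $z_n\in\{0,1\}$, where $B_{i,n}(z)=z$ if $b_n(i)=1$ and $1-z$ if $b_n(i)=0$. Its multilinear expansion is $f=\sum_{S\subseteq\{0,\dots,N-1\}}\bar d_S\prod_{n\in S}z_n$, with $\bar d_S=\sum_{l}\sum_{i:\,b_n(i)=0\ \forall n\notin S}d_{l,i}\prod_{n\in S}(-1)^{1-b_n(i)}$. *)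

theory Defs
  imports Complex_Main
begin

text \<open>Antennas k < Nt; antenna k carries Nb k bits; constellation point a k t (t < 2^(Nb k)).\<close>

definition Ntot :: "(nat \<Rightarrow> nat) \<Rightarrow> nat \<Rightarrow> nat" where
  "Ntot Nb Nt = (\<Sum>k<Nt. Nb k)"

definition offs :: "(nat \<Rightarrow> nat) \<Rightarrow> nat \<Rightarrow> nat" where
  "offs Nb k = (\<Sum>l<k. Nb l)"

definition blk :: "(nat \<Rightarrow> nat) \<Rightarrow> nat \<Rightarrow> nat set" where
  "blk Nb k = {offs Nb k ..< offs Nb k + Nb k}"

text \<open>Bit at position n (0 = most significant) of the w-bit binary representation of i.\<close>
definition msb_bit :: "nat \<Rightarrow> nat \<Rightarrow> nat \<Rightarrow> bool" where
  "msb_bit w i n = bit i (w - 1 - n)"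

text \<open>The local index i_k of antenna k within the joint index i (N-bit representation
  of i is the concatenation of the Nb k-bit representations of i_0, ..., i_{Nt-1}).\<close>
definition sub_index :: "(nat \<Rightarrow> nat) \<Rightarrow> nat \<Rightarrow> nat \<Rightarrow> nat \<Rightarrow> nat" where
  "sub_index Nb Nt k i = (i div 2 ^ (Ntot Nb Nt - offs Nb k - Nb k)) mod 2 ^ (Nb k)"

definition dval :: "(nat \<Rightarrow> nat) \<Rightarrow> nat \<Rightarrow> (nat \<Rightarrow> nat \<Rightarrow> complex) \<Rightarrow>
    (nat \<Rightarrow> complex) \<Rightarrow> (nat \<Rightarrow> nat \<Rightarrow> complex) \<Rightarrow> nat \<Rightarrow> nat \<Rightarrow> real" where
  "dval Nb Nt a y H l i = (cmod (y l - (\<Sum>k<Nt. H l k * a k (sub_index Nb Nt k i)))) ^ 2"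

definition dbar :: "(nat \<Rightarrow> nat) \<Rightarrow> nat \<Rightarrow> nat \<Rightarrow> (nat \<Rightarrow> nat \<Rightarrow> complex) \<Rightarrow>
    (nat \<Rightarrow> complex) \<Rightarrow> (nat \<Rightarrow> nat \<Rightarrow> complex) \<Rightarrow> nat set \<Rightarrow> real" where
  "dbar Nb Nt Nr a y H S =
     (\<Sum>l<Nr. \<Sum>i\<in>{i. i < 2 ^ Ntot Nb Nt \<and>
                        (\<forall>n<Ntot Nb Nt. n \<notin> S \<longrightarrow> \<not> msb_bit (Ntot Nb Nt) i n)}.
        dval Nb Nt a y H l i *
        (\<Prod>n\<in>S. if msb_bit (Ntot Nb Nt) i n then 1 else -1))"

definition nzeros :: "nat \<Rightarrow> nat \<Rightarrow> nat" where
  "nzeros w t = card {j. j < w \<and> \<not> msb_bit w t j}"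

definition sel_points :: "(nat \<Rightarrow> nat) \<Rightarrow> nat set \<Rightarrow> nat \<Rightarrow> nat set" where
  "sel_points Nb S k = {t. t < 2 ^ Nb k \<and>
      (\<forall>j<Nb k. offs Nb k + j \<notin> S \<longrightarrow> \<not> msb_bit (Nb k) t j)}"

text \<open>p1 p2 p3 p4 (in cyclic order) are the four distinct vertices of a rectangle:
  a parallelogram (diagonals bisect each other) with diagonals of equal length.
  Diagonals are (p1,p3) and (p2,p4).\<close>
definition is_rectangle :: "complex \<Rightarrow> complex \<Rightarrow> complex \<Rightarrow> complex \<Rightarrow> bool" where
  "is_rectangle p1 p2 p3 p4 \<longleftrightarrow> distinct [p1, p2, p3, p4] \<and>
      p1 + p3 = p2 + p4 \<and> cmod (p1 - p3) = cmod (p2 - p4)"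

definition quad_set :: "nat \<times> nat \<times> nat \<times> nat \<Rightarrow> nat set" where
  "quad_set q = (case q of (t1, t2, t3, t4) \<Rightarrow> {t1, t2, t3, t4})"

definition rect_family :: "(nat \<Rightarrow> nat) \<Rightarrow> (nat \<Rightarrow> nat \<Rightarrow> complex) \<Rightarrow> nat set \<Rightarrow> nat \<Rightarrow>
    (nat \<times> nat \<times> nat \<times> nat) set \<Rightarrow> bool" where
  "rect_family Nb a S k Rs \<longleftrightarrow>
     (\<forall>(t1, t2, t3, t4) \<in> Rs.
        is_rectangle (a k t1) (a k t2) (a k t3) (a k t4) \<and>
        odd (nzeros (Nb k) t1) \<and> odd (nzeros (Nb k) t3) \<and>
        even (nzeros (Nb k) t2) \<and> even (nzeros (Nb k) t4)) \<and>
     (\<forall>q\<in>Rs. \<forall>q'\<in>Rs. q \<noteq> q' \<longrightarrow> quad_set q \<inter> quad_set q' = {}) \<and>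
     (\<Union>q\<in>Rs. quad_set q) = sel_points Nb S k"

end

theory Submission
  imports Defs
begin

(* Write an admissible joint index as i = b + 2^lo * t, where t is the local label of the
   distinguished antenna k and b carries all other bits.  For fixed b, the distance d_{l,i}
   equals |c - h a_t|^2 with c independent of t, and the sign prod_{n in S} (+-1) is a factor
   depending only on b times (-1)^(number of zeros of t).  Hence every b contributes a multiple
   of sum_t (-1)^(zeros of t) |c - h a_t|^2, which vanishes rectangle by rectangle: by the
   British flag theorem |z - p1|^2 + |z - p3|^2 = |z - p2|^2 + |z - p4|^2 for a rectangle with
   diagonals (p1, p3), (p2, p4), and the parity condition gives the two diagonals opposite signs. *)

unbundle bit_operations_syntax

lemma less_power_iff_bit: "(i::nat) < 2 ^ w \<longleftrightarrow> (\<forall>q. bit i q \<longrightarrow> q < w)"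
proof
  assume "i < 2 ^ w"
  then have "take_bit w i = i"
    by (simp add: take_bit_nat_eq_self)
  then show "\<forall>q. bit i q \<longrightarrow> q < w"
    using bit_take_bit_iff[of w i] by auto
next
  assume "\<forall>q. bit i q \<longrightarrow> q < w"
  then have "take_bit w i = i"
    by (intro bit_eqI) (auto simp: bit_take_bit_iff)
  then show "i < 2 ^ w"
    by (simp add: take_bit_nat_eq_self_iff)
qed

lemma bit_less_power: "(t::nat) < 2 ^ w \<Longrightarrow> bit t q \<Longrightarrow> q < w"
  by (simp add: less_power_iff_bit)

definition bits_within :: "nat set \<Rightarrow> nat set" where
  "bits_within A = {i. \<forall>q. bit i q \<longrightarrow> q \<in> A}"

(* Positions in a w-bit label are counted from the most significant bit (see msb_bit);
   lsb_positions w S lists the corresponding ordinary bit indices. *)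
definition lsb_positions :: "nat \<Rightarrow> nat set \<Rightarrow> nat set" where
  "lsb_positions w S = {q. q < w \<and> w - 1 - q \<in> S}"

lemma msb_constrained_eq_bits_within:
  "{i. i < 2 ^ w \<and> (\<forall>n<w. n \<notin> S \<longrightarrow> \<not> msb_bit w i n)} = bits_within (lsb_positions w S)"
proof -
  have "(\<forall>n<w. n \<notin> S \<longrightarrow> \<not> bit i (w - 1 - n)) \<longleftrightarrow> (\<forall>q<w. bit i q \<longrightarrow> w - 1 - q \<in> S)"
    for i :: nat
  proof (intro iffI allI impI)
    fix q assume H: "\<forall>n<w. n \<notin> S \<longrightarrow> \<not> bit i (w - 1 - n)" and "q < w" "bit i q"
    have "w - 1 - q < w"
      using \<open>q < w\<close> by linarith
    then have "w - 1 - q \<notin> S \<longrightarrow> \<not> bit i (w - 1 - (w - 1 - q))"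
      using H by blast
    moreover have "w - 1 - (w - 1 - q) = q"
      using \<open>q < w\<close> by linarith
    ultimately show "w - 1 - q \<in> S"
      using \<open>bit i q\<close> by argo
  next
    fix n assume H: "\<forall>q<w. bit i q \<longrightarrow> w - 1 - q \<in> S" and "n < w" "n \<notin> S"
    have "w - 1 - n < w"
      using \<open>n < w\<close> by linarith
    then have "bit i (w - 1 - n) \<longrightarrow> w - 1 - (w - 1 - n) \<in> S"
      using H by blast
    moreover have "w - 1 - (w - 1 - n) = n"
      using \<open>n < w\<close> by linarith
    ultimately show "\<not> bit i (w - 1 - n)"
      using \<open>n \<notin> S\<close> by argo
  qed
  then show ?thesis
    by (auto simp: msb_bit_def bits_within_def lsb_positions_def less_power_iff_bit)
qed

lemma prod_msb_bit_reindex: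
  assumes "S \<subseteq> {..<w}"
  shows "(\<Prod>n\<in>S. f (msb_bit w i n)) = (\<Prod>q\<in>lsb_positions w S. f (bit i q))"
  by (rule prod.reindex_bij_witness[where i = "\<lambda>q. w - 1 - q" and j = "\<lambda>n. w - 1 - n"])
     (use assms in \<open>auto simp: lsb_positions_def msb_bit_def\<close>)

lemma sum_msb_signs_eq_sum_bits_within:
  assumes "S \<subseteq> {..<w}"
  shows "(\<Sum>i\<in>{i. i < 2 ^ w \<and> (\<forall>n<w. n \<notin> S \<longrightarrow> \<not> msb_bit w i n)}.
           g i * (\<Prod>n\<in>S. if msb_bit w i n then 1 else -1 :: real)) =
    (\<Sum>i\<in>bits_within (lsb_positions w S). g i * (\<Prod>q\<in>lsb_positions w S. if bit i q then 1 else -1))"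
  using prod_msb_bit_reindex[OF assms, of "\<lambda>b. if b then 1 else -1 :: real"]
  by (simp add: msb_constrained_eq_bits_within)

lemma bit_or_push_bit_iff:
  "bit (b OR push_bit lo t) q \<longleftrightarrow> bit (b::nat) q \<or> (lo \<le> q \<and> bit t (q - lo))"
  by (auto simp: bit_or_iff bit_push_bit_iff)

definition bit_field :: "nat \<Rightarrow> nat \<Rightarrow> nat \<Rightarrow> nat" where
  "bit_field lo w i = take_bit w (drop_bit lo i)"

definition clear_field :: "nat \<Rightarrow> nat \<Rightarrow> nat \<Rightarrow> nat" where
  "clear_field lo w i = take_bit lo i OR push_bit (lo + w) (drop_bit (lo + w) i)"

lemma bit_bit_field: "bit (bit_field lo w i) j \<longleftrightarrow> j < w \<and> bit i (lo + j)"
  by (simp add: bit_field_def bit_take_bit_iff bit_drop_bit_eq)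

lemma bit_clear_field: "bit (clear_field lo w i) q \<longleftrightarrow> bit i q \<and> (q < lo \<or> lo + w \<le> q)"
  by (auto simp: clear_field_def bit_or_iff bit_take_bit_iff bit_push_bit_iff bit_drop_bit_eq)

lemma bit_field_or_push_bit_same:
  assumes "\<And>q. lo \<le> q \<Longrightarrow> q < lo + w \<Longrightarrow> \<not> bit b q" and "t < 2 ^ w"
  shows "bit_field lo w (b OR push_bit lo t) = t"
  by (rule bit_eqI)
     (use assms(1) in \<open>auto simp: bit_bit_field bit_or_push_bit_iff dest: bit_less_power[OF assms(2)]\<close>)

lemma bit_field_or_push_bit_disjoint:
  assumes "t < 2 ^ w" and "p + w' \<le> lo \<or> lo + w \<le> p"
  shows "bit_field p w' (b OR push_bit lo t) = bit_field p w' b"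
  by (rule bit_eqI)
     (use assms(2) in \<open>auto simp: bit_bit_field bit_or_push_bit_iff dest: bit_less_power[OF assms(1)]\<close>)

lemma bij_betw_or_push_bit:
  "bij_betw (\<lambda>(b, t). b OR push_bit lo t)
     (bits_within (A - {lo..<lo + w}) \<times> bits_within {j. j < w \<and> lo + j \<in> A}) (bits_within A)"
proof (rule bij_betw_byWitness[where f' = "\<lambda>i. (clear_field lo w i, bit_field lo w i)"])
  let ?B = "bits_within (A - {lo..<lo + w})" and ?T = "bits_within {j. j < w \<and> lo + j \<in> A}"
  show "\<forall>x\<in>?B \<times> ?T. (clear_field lo w ((\<lambda>(b, t). b OR push_bit lo t) x),
      bit_field lo w ((\<lambda>(b, t). b OR push_bit lo t) x)) = x"
  proof (clarsimp, intro conjI)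
    fix b t assume "b \<in> ?B" "t \<in> ?T"
    then have b: "\<And>q. bit b q \<Longrightarrow> q \<in> A \<and> (q < lo \<or> lo + w \<le> q)"
      and t: "\<And>j. bit t j \<Longrightarrow> j < w \<and> lo + j \<in> A"
      by (auto simp: bits_within_def)
    show "clear_field lo w (b OR push_bit lo t) = b"
      by (rule bit_eqI) (use b t in \<open>fastforce simp: bit_clear_field bit_or_push_bit_iff\<close>)
    show "bit_field lo w (b OR push_bit lo t) = t"
      by (rule bit_field_or_push_bit_same) (use b t in \<open>fastforce simp: less_power_iff_bit\<close>)+
  qed
  show "\<forall>i\<in>bits_within A. (\<lambda>(b, t). b OR push_bit lo t) (clear_field lo w i, bit_field lo w i) = i"
    by (auto intro!: bit_eqI simp: bit_or_push_bit_iff bit_clear_field bit_bit_field)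
  show "(\<lambda>(b, t). b OR push_bit lo t) ` (?B \<times> ?T) \<subseteq> bits_within A"
    by (auto simp: bits_within_def bit_or_push_bit_iff) (metis le_add_diff_inverse)
  show "(\<lambda>i. (clear_field lo w i, bit_field lo w i)) ` bits_within A \<subseteq> ?B \<times> ?T"
    by (auto simp: bits_within_def bit_clear_field bit_bit_field)
qed

lemma sum_bits_within_split:
  "(\<Sum>i\<in>bits_within A. g i) =
     (\<Sum>b\<in>bits_within (A - {lo..<lo + w}).
        \<Sum>t\<in>bits_within {j. j < w \<and> lo + j \<in> A}. g (b OR push_bit lo t))"
  using sum.reindex_bij_betw[OF bij_betw_or_push_bit, of g lo A w]
  by (simp add: sum.cartesian_product split_def)

lemma prod_or_push_bit_split:
  fixes b t :: nat
  assumes "finite A" and "\<And>q. lo \<le> q \<Longrightarrow> q < lo + w \<Longrightarrow> \<not> bit b q" and "t < 2 ^ w"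
  shows "(\<Prod>q\<in>A. f (bit (b OR push_bit lo t) q)) =
    (\<Prod>q\<in>A - {lo..<lo + w}. f (bit b q)) * (\<Prod>j\<in>{j. j < w \<and> lo + j \<in> A}. f (bit t j))"
proof -
  have field: "(\<Prod>q\<in>A \<inter> {lo..<lo + w}. f (bit (b OR push_bit lo t) q)) =
      (\<Prod>j\<in>{j. j < w \<and> lo + j \<in> A}. f (bit t j))"
  proof -
    have "A \<inter> {lo..<lo + w} = (\<lambda>j. lo + j) ` {j. j < w \<and> lo + j \<in> A}"
      by (auto simp: image_iff) (metis le_add_diff_inverse nat_add_left_cancel_less)
    then have "(\<Prod>q\<in>A \<inter> {lo..<lo + w}. f (bit (b OR push_bit lo t) q)) =
        (\<Prod>j\<in>{j. j < w \<and> lo + j \<in> A}. f (bit (b OR push_bit lo t) (lo + j)))"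
      by (simp add: prod.reindex)
    also have "\<dots> = (\<Prod>j\<in>{j. j < w \<and> lo + j \<in> A}. f (bit t j))"
      by (rule prod.cong) (use assms(2) in \<open>auto simp: bit_or_push_bit_iff\<close>)
    finally show ?thesis .
  qed
  have rest: "(\<Prod>q\<in>A - {lo..<lo + w}. f (bit (b OR push_bit lo t) q)) = (\<Prod>q\<in>A - {lo..<lo + w}. f (bit b q))"
  proof (rule prod.cong)
    fix q assume "q \<in> A - {lo..<lo + w}"
    then have "\<not> (lo \<le> q \<and> bit t (q - lo))"
      using bit_less_power[OF assms(3), of "q - lo"] by auto
    then have "bit (b OR push_bit lo t) q = bit b q"
      by (auto simp: bit_or_push_bit_iff)
    then show "f (bit (b OR push_bit lo t) q) = f (bit b q)"
      by simp
  qed simp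
  show ?thesis
    using prod.Int_Diff[OF assms(1), of "\<lambda>q. f (bit (b OR push_bit lo t) q)" "{lo..<lo + w}"] field rest
    by (simp add: mult.commute)
qed

lemma prod_sign_eq_power:
  "finite A \<Longrightarrow> (\<Prod>j\<in>A. if P j then 1 else -1 :: real) = (-1) ^ card {j\<in>A. \<not> P j}"
  by (subst prod.mono_neutral_cong_right[of A "{j\<in>A. \<not> P j}" _ "\<lambda>_. -1"]) auto

lemma power_nzeros_eq_prod:
  "(-1) ^ nzeros w t = (\<Prod>q<w. if bit t q then 1 else -1 :: real)"
proof -
  have "lsb_positions w {..<w} = {..<w}"
    by (auto simp: lsb_positions_def)
  then show ?thesis
    using prod_msb_bit_reindex[of "{..<w}" w "\<lambda>b. if b then 1 else -1 :: real" t]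
    by (simp add: prod_sign_eq_power nzeros_def)
qed

lemma power_nzeros_bits_within:
  assumes "t \<in> bits_within T" and "T \<subseteq> {..<w}"
  shows "(-1) ^ nzeros w t = (-1) ^ card ({..<w} - T) * (\<Prod>j\<in>T. if bit t j then 1 else -1 :: real)"
proof -
  have "(\<Prod>q\<in>{..<w} - T. if bit t q then 1 else -1 :: real) = (\<Prod>q\<in>{..<w} - T. -1)"
    by (rule prod.cong) (use assms(1) in \<open>auto simp: bits_within_def\<close>)
  then show ?thesis
    using prod.subset_diff[OF assms(2), of "\<lambda>q. if bit t q then 1 else -1 :: real"]
    by (simp add: power_nzeros_eq_prod)
qed

lemma british_flag:
  fixes p1 p2 p3 p4 z :: complex
  assumes "p1 + p3 = p2 + p4" and "cmod (p1 - p3) = cmod (p2 - p4)"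
  shows "cmod (z - p1) ^ 2 + cmod (z - p3) ^ 2 = cmod (z - p2) ^ 2 + cmod (z - p4) ^ 2"
proof -
  have parallelogram: "cmod u ^ 2 + cmod v ^ 2 = (cmod (u + v) ^ 2 + cmod (u - v) ^ 2) / 2" for u v :: complex
    unfolding cmod_power2 by (simp add: algebra_simps power2_eq_square)
  have "(z - p1) + (z - p3) = (z - p2) + (z - p4)" "cmod ((z - p1) - (z - p3)) = cmod ((z - p2) - (z - p4))"
    using assms by (simp_all add: algebra_simps norm_minus_commute)
  then show ?thesis
    using parallelogram[of "z - p1" "z - p3"] parallelogram[of "z - p2" "z - p4"] by simp
qed

lemma is_rectangle_sq_dist:
  assumes "is_rectangle p1 p2 p3 p4"
  shows "cmod (c - h * p1) ^ 2 + cmod (c - h * p3) ^ 2 = cmod (c - h * p2) ^ 2 + cmod (c - h * p4) ^ 2"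
proof (rule british_flag)
  show "h * p1 + h * p3 = h * p2 + h * p4" "cmod (h * p1 - h * p3) = cmod (h * p2 - h * p4)"
    using assms by (simp_all add: is_rectangle_def flip: distrib_left right_diff_distrib add: norm_mult)
qed

lemma rect_family_alternating_sum_eq_0:
  assumes "rect_family Nb a S k Rs"
    and "\<And>p1 p2 p3 p4. is_rectangle p1 p2 p3 p4 \<Longrightarrow> g p1 + g p3 = g p2 + (g p4 :: real)"
  shows "(\<Sum>t\<in>sel_points Nb S k. (-1) ^ nzeros (Nb k) t * g (a k t)) = 0"
proof -
  let ?F = "\<lambda>t. (-1) ^ nzeros (Nb k) t * g (a k t)"
  have cover: "sel_points Nb S k = \<Union> (quad_set ` Rs)"
    using assms(1) by (auto simp: rect_family_def)
  have "A \<inter> B = {}" if AB: "A \<in> quad_set ` Rs" "B \<in> quad_set ` Rs" and "A \<noteq> B" for A B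
  proof -
    obtain q q' where "q \<in> Rs" "q' \<in> Rs" "A = quad_set q" "B = quad_set q'"
      using AB by blast
    moreover have "q \<noteq> q'"
      using calculation \<open>A \<noteq> B\<close> by blast
    ultimately show ?thesis
      using assms(1) by (simp add: rect_family_def)
  qed
  then have "sum ?F (\<Union> (quad_set ` Rs)) = (\<Sum>A\<in>quad_set ` Rs. sum ?F A)"
    by (subst sum.Union_disjoint) (auto simp: quad_set_def)
  also have "\<dots> = 0"
  proof (rule sum.neutral, rule ballI)
    fix A assume "A \<in> quad_set ` Rs"
    then obtain t1 t2 t3 t4 where "(t1, t2, t3, t4) \<in> Rs" and A: "A = {t1, t2, t3, t4}"
      by (auto simp: quad_set_def)
    then have R: "is_rectangle (a k t1) (a k t2) (a k t3) (a k t4)"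
      and "odd (nzeros (Nb k) t1)" "odd (nzeros (Nb k) t3)" "even (nzeros (Nb k) t2)" "even (nzeros (Nb k) t4)"
      using assms(1) by (fastforce simp: rect_family_def)+
    moreover have "distinct [t1, t2, t3, t4]"
      using R by (auto simp: is_rectangle_def)
    ultimately show "sum ?F A = 0"
      using assms(2)[OF R] by (simp add: A)
  qed
  finally show ?thesis using cover by simp
qed

lemma sel_points_eq_bits_within:
  "sel_points Nb S k = bits_within (lsb_positions (Nb k) {j. offs Nb k + j \<in> S})"
  using msb_constrained_eq_bits_within[of "Nb k" "{j. offs Nb k + j \<in> S}"]
  by (simp add: sel_points_def)

lemma sum_sign_sq_dist_eq_0:
  assumes "rect_family Nb a S k Rs"
  shows "(\<Sum>t\<in>sel_points Nb S k. (\<Prod>j\<in>lsb_positions (Nb k) {j. offs Nb k + j \<in> S}. if bit t j then 1 else -1)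
           * cmod (c - h * a k t) ^ 2) = 0"
proof -
  define T where "T = lsb_positions (Nb k) {j. offs Nb k + j \<in> S}"
  define \<epsilon> :: real where "\<epsilon> = (-1) ^ card ({..<Nb k} - T)"
  have "T \<subseteq> {..<Nb k}"
    by (auto simp: T_def lsb_positions_def)
  then have "(-1) ^ nzeros (Nb k) t = \<epsilon> * (\<Prod>j\<in>T. if bit t j then 1 else -1)"
    if "t \<in> sel_points Nb S k" for t
    using power_nzeros_bits_within that by (simp add: \<epsilon>_def T_def sel_points_eq_bits_within)
  then have "\<epsilon> * (\<Sum>t\<in>sel_points Nb S k. (\<Prod>j\<in>T. if bit t j then 1 else -1) * cmod (c - h * a k t) ^ 2) =
      (\<Sum>t\<in>sel_points Nb S k. (-1) ^ nzeros (Nb k) t * cmod (c - h * a k t) ^ 2)"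
    by (simp add: sum_distrib_left mult.assoc)
  also have "\<dots> = 0"
    using rect_family_alternating_sum_eq_0[OF assms, of "\<lambda>p. cmod (c - h * p) ^ 2"] is_rectangle_sq_dist by blast
  finally show ?thesis
    by (simp add: T_def \<epsilon>_def)
qed

definition field_shift :: "(nat \<Rightarrow> nat) \<Rightarrow> nat \<Rightarrow> nat \<Rightarrow> nat" where
  "field_shift Nb Nt k = Ntot Nb Nt - offs Nb k - Nb k"

lemma sub_index_eq_bit_field: "sub_index Nb Nt k = bit_field (field_shift Nb Nt k) (Nb k)"
  by (simp add: fun_eq_iff sub_index_def bit_field_def field_shift_def take_bit_eq_mod drop_bit_eq_div)

lemma offs_add_le_offs: "k < k' \<Longrightarrow> offs Nb k + Nb k \<le> offs Nb k'"
  unfolding offs_def by (simp flip: sum.lessThan_Suc add: sum_mono2)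

lemma offs_add_le_Ntot: "k < Nt \<Longrightarrow> offs Nb k + Nb k \<le> Ntot Nb Nt"
  unfolding Ntot_def offs_def by (simp flip: sum.lessThan_Suc add: sum_mono2)

lemma field_shifts_disjoint:
  assumes "k < Nt" "k' < Nt" "k' \<noteq> k"
  shows "field_shift Nb Nt k' + Nb k' \<le> field_shift Nb Nt k \<or> field_shift Nb Nt k + Nb k \<le> field_shift Nb Nt k'"
  using assms offs_add_le_Ntot[of _ Nt Nb] offs_add_le_offs[of k k' Nb] offs_add_le_offs[of k' k Nb]
  unfolding field_shift_def by (cases "k < k'") auto

lemma lsb_positions_field_shift:
  assumes "k < Nt"
  shows "{j. j < Nb k \<and> field_shift Nb Nt k + j \<in> lsb_positions (Ntot Nb Nt) S} =
    lsb_positions (Nb k) {j. offs Nb k + j \<in> S}"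
proof -
  have "Ntot Nb Nt - 1 - (field_shift Nb Nt k + j) = offs Nb k + (Nb k - 1 - j)" if "j < Nb k" for j
    using offs_add_le_Ntot[OF assms, of Nb] that unfolding field_shift_def by linarith
  then show ?thesis
    using offs_add_le_Ntot[OF assms, of Nb] by (auto simp: lsb_positions_def field_shift_def)
qed

lemma dval_or_push_bit:
  assumes "k < Nt"
    and "\<And>q. field_shift Nb Nt k \<le> q \<Longrightarrow> q < field_shift Nb Nt k + Nb k \<Longrightarrow> \<not> bit b q"
    and "t < 2 ^ Nb k"
  shows "dval Nb Nt a y H l (b OR push_bit (field_shift Nb Nt k) t) =
    cmod (y l - (\<Sum>k'\<in>{..<Nt} - {k}. H l k' * a k' (sub_index Nb Nt k' b)) - H l k * a k t) ^ 2"
proof -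
  let ?i = "b OR push_bit (field_shift Nb Nt k) t"
  have "(\<Sum>k'<Nt. H l k' * a k' (sub_index Nb Nt k' ?i)) =
      H l k * a k (sub_index Nb Nt k ?i) + (\<Sum>k'\<in>{..<Nt} - {k}. H l k' * a k' (sub_index Nb Nt k' ?i))"
    using assms(1) by (simp add: sum.remove)
  also have "\<dots> = H l k * a k t + (\<Sum>k'\<in>{..<Nt} - {k}. H l k' * a k' (sub_index Nb Nt k' b))"
    using field_shifts_disjoint[OF assms(1)] assms(2,3)
    by (auto simp: sub_index_eq_bit_field bit_field_or_push_bit_same bit_field_or_push_bit_disjoint
        intro!: sum.cong)
  finally show ?thesis
    by (simp add: dval_def algebra_simps)
qed

lemma dbar_summand_eq_0:
  assumes "k < Nt" and "rect_family Nb a S k Rs" and "S \<subseteq> {..<Ntot Nb Nt}"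
  shows "(\<Sum>i\<in>{i. i < 2 ^ Ntot Nb Nt \<and> (\<forall>n<Ntot Nb Nt. n \<notin> S \<longrightarrow> \<not> msb_bit (Ntot Nb Nt) i n)}.
      dval Nb Nt a y H l i * (\<Prod>n\<in>S. if msb_bit (Ntot Nb Nt) i n then 1 else -1)) = 0"
proof -
  let ?A = "lsb_positions (Ntot Nb Nt) S" and ?lo = "field_shift Nb Nt k"
    and ?T = "lsb_positions (Nb k) {j. offs Nb k + j \<in> S}"
  let ?sgn = "\<lambda>i q. if bit i q then 1 else -1 :: real"
  let ?G = "\<lambda>i. dval Nb Nt a y H l i * (\<Prod>q\<in>?A. ?sgn i q)"
  have "finite ?A"
    by (simp add: lsb_positions_def)
  have T_eq: "{j. j < Nb k \<and> ?lo + j \<in> ?A} = ?T"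
    by (rule lsb_positions_field_shift[OF assms(1)])
  have "(\<Sum>i\<in>{i. i < 2 ^ Ntot Nb Nt \<and> (\<forall>n<Ntot Nb Nt. n \<notin> S \<longrightarrow> \<not> msb_bit (Ntot Nb Nt) i n)}.
      dval Nb Nt a y H l i * (\<Prod>n\<in>S. if msb_bit (Ntot Nb Nt) i n then 1 else -1)) = (\<Sum>i\<in>bits_within ?A. ?G i)"
    by (rule sum_msb_signs_eq_sum_bits_within[OF assms(3)])
  also have "\<dots> = (\<Sum>b\<in>bits_within (?A - {?lo..<?lo + Nb k}). \<Sum>t\<in>bits_within ?T. ?G (b OR push_bit ?lo t))"
    using sum_bits_within_split[where A = ?A and lo = ?lo and w = "Nb k" and g = ?G] unfolding T_eq .
  also have "\<dots> = 0"
  proof (rule sum.neutral, rule ballI)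
    fix b assume "b \<in> bits_within (?A - {?lo..<?lo + Nb k})"
    then have no_bit: "\<And>q. ?lo \<le> q \<Longrightarrow> q < ?lo + Nb k \<Longrightarrow> \<not> bit b q"
      by (auto simp: bits_within_def)
    define c where "c = y l - (\<Sum>k'\<in>{..<Nt} - {k}. H l k' * a k' (sub_index Nb Nt k' b))"
    have "?G (b OR push_bit ?lo t) =
        (\<Prod>q\<in>?A - {?lo..<?lo + Nb k}. ?sgn b q) * ((\<Prod>j\<in>?T. ?sgn t j) * cmod (c - H l k * a k t) ^ 2)"
      if "t \<in> bits_within ?T" for t
    proof -
      have t: "t < 2 ^ Nb k"
        using that by (auto simp: less_power_iff_bit bits_within_def lsb_positions_def)
      show ?thesis
        using dval_or_push_bit[where Nb = Nb and b = b and t = t, OF assms(1) no_bit t]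
          prod_or_push_bit_split[where b = b and t = t and lo = ?lo and w = "Nb k"
            and f = "\<lambda>b. if b then 1 else -1 :: real", OF \<open>finite ?A\<close> no_bit t]
        by (simp add: c_def T_eq)
    qed
    then show "(\<Sum>t\<in>bits_within ?T. ?G (b OR push_bit ?lo t)) = 0"
      using sum_sign_sq_dist_eq_0[OF assms(2), of c "H l k"]
      by (simp add: sel_points_eq_bits_within flip: sum_distrib_left)
  qed
  finally show ?thesis .
qed

theorem proposition3:
  fixes Nt Nr :: nat and Nb :: "nat \<Rightarrow> nat"
    and a :: "nat \<Rightarrow> nat \<Rightarrow> complex"
    and y :: "nat \<Rightarrow> complex" and H :: "nat \<Rightarrow> nat \<Rightarrow> complex"
    and S :: "nat set"
  assumes "S \<subseteq> {..<Ntot Nb Nt}"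
    and "\<exists>k<Nt. \<exists>Rs. rect_family Nb a S k Rs"
  shows "dbar Nb Nt Nr a y H S = 0"
proof -
  obtain k Rs where "k < Nt" "rect_family Nb a S k Rs"
    using assms(2) by blast
  then show ?thesis
    unfolding dbar_def using dbar_summand_eq_0[OF _ _ assms(1)] by simp
qed

end
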